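(* Let $S$ be a countable set (with its power set as $\sigma$-field) on which $G$ acts measurably. Then $G$ acts properly on $S$ if and only if $0<\lambda(G_{s,s})<\infty$ for all $s\in S$. In this case $$\Delta^*(s)=\frac{\lambda(G_{s,s})}{\lambda(G_{\beta(s),\beta(s)})}=\frac{|G_{s,s}\beta(s)|}{|G_{\beta(s),\beta(s)}s|},\qquad s\in S,$$ and either all orbits are infinite or all orbits are finite.
   Context: $G$ is a locally compact second countable Hausdorff group with left Haar measure $\lambda$ and modular function $\Delta$ ($\int f(gh)\lambda(dg)=\Delta(h^{-1})\int f\,d\lambda$). $G_{s,t}=\{g:gs=t\}$. Proper action: with $\mu_s$ the image of $\lambda$ under $g\mapsto gs$, there is a partition $B_1,B_2,\dots$ of $S$ with $\mu_s(B_n)<\infty$ for all $s,n$. $O$ is a system of representatives of the orbits, $\beta(s)\in O$ the representative of $Gs$, and $\Delta^*(s):=\Delta(g^{-1})$ for any $g$ with $g\beta(s)=s$ (well defined under properness). $|A|$ is cardinality and $G_{s,s}t=\{gt:g\in G_{s,s}\}$. *)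

theory Defs
  imports "HOL-Analysis.Analysis"
begin

text \<open>A locally compact second countable Hausdorff group: the group structure
(gmul, ginv, e) lives on the whole type 'g, whose topology is the type-class topology.\<close>
definition lcsc_group :: "('g::{t2_space,second_countable_topology} \<Rightarrow> 'g \<Rightarrow> 'g) \<Rightarrow> ('g \<Rightarrow> 'g) \<Rightarrow> 'g \<Rightarrow> bool" where
  "lcsc_group gmul ginv e \<longleftrightarrow>
     (\<forall>x y z. gmul (gmul x y) z = gmul x (gmul y z)) \<and>
     (\<forall>x. gmul e x = x \<and> gmul x e = x) \<and>
     (\<forall>x. gmul (ginv x) x = e \<and> gmul x (ginv x) = e) \<and>
     continuous_on UNIV (\<lambda>(x, y). gmul x y) \<and>
     continuous_on UNIV ginv \<and>
     locally_compact_space (euclidean :: 'g topology)"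

definition left_haar :: "('g::topological_space \<Rightarrow> 'g \<Rightarrow> 'g) \<Rightarrow> 'g measure \<Rightarrow> bool" where
  "left_haar gmul lam \<longleftrightarrow>
     sets lam = sets borel \<and>
     (\<forall>g A. A \<in> sets borel \<longrightarrow> emeasure lam ((\<lambda>x. gmul g x) ` A) = emeasure lam A) \<and>
     (\<forall>K. compact K \<longrightarrow> emeasure lam K < \<infinity>) \<and>
     (\<forall>U. open U \<and> U \<noteq> {} \<longrightarrow> 0 < emeasure lam U)"

definition modular_fun :: "('g::topological_space \<Rightarrow> 'g \<Rightarrow> 'g) \<Rightarrow> ('g \<Rightarrow> 'g) \<Rightarrow> 'g measure \<Rightarrow> ('g \<Rightarrow> real) \<Rightarrow> bool" where
  "modular_fun gmul ginv lam Delta \<longleftrightarrow>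
     (\<forall>h. 0 < Delta h) \<and>
     (\<forall>h. \<forall>f \<in> borel_measurable borel.
        (\<integral>\<^sup>+ g. f (gmul g h) \<partial>lam) = ennreal (Delta (ginv h)) * (\<integral>\<^sup>+ g. f g \<partial>lam))"

definition measurable_action ::
  "('g::topological_space \<Rightarrow> 'g \<Rightarrow> 'g) \<Rightarrow> 'g \<Rightarrow> ('g \<Rightarrow> 's \<Rightarrow> 's) \<Rightarrow> 's set \<Rightarrow> bool" where
  "measurable_action gmul e act S \<longleftrightarrow>
     (\<forall>g. \<forall>s\<in>S. act g s \<in> S) \<and>
     (\<forall>s\<in>S. act e s = s) \<and>
     (\<forall>g h. \<forall>s\<in>S. act (gmul g h) s = act g (act h s)) \<and>
     (\<lambda>(g, s). act g s) \<in> measurable (borel \<Otimes>\<^sub>M count_space S) (count_space S)"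

definition Gst :: "('g \<Rightarrow> 's \<Rightarrow> 's) \<Rightarrow> 's \<Rightarrow> 's \<Rightarrow> 'g set" where
  "Gst act s t = {g. act g s = t}"

definition orbit :: "('g \<Rightarrow> 's \<Rightarrow> 's) \<Rightarrow> 's \<Rightarrow> 's set" where
  "orbit act s = range (\<lambda>g. act g s)"

definition orbit_measure :: "'g measure \<Rightarrow> ('g \<Rightarrow> 's \<Rightarrow> 's) \<Rightarrow> 's set \<Rightarrow> 's \<Rightarrow> 's measure" where
  "orbit_measure lam act S s = distr lam (count_space S) (\<lambda>g. act g s)"

definition proper_action :: "'g measure \<Rightarrow> ('g \<Rightarrow> 's \<Rightarrow> 's) \<Rightarrow> 's set \<Rightarrow> bool" where
  "proper_action lam act S \<longleftrightarrow>
     (\<exists>B :: nat \<Rightarrow> 's set.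
        disjoint_family B \<and> (\<Union>n. B n) = S \<and>
        (\<forall>s\<in>S. \<forall>n. emeasure (orbit_measure lam act S s) (B n) < \<infinity>))"

definition orbit_rep :: "('g \<Rightarrow> 's \<Rightarrow> 's) \<Rightarrow> 's set \<Rightarrow> ('s \<Rightarrow> 's) \<Rightarrow> bool" where
  "orbit_rep act S beta \<longleftrightarrow>
     (\<forall>s\<in>S. beta s \<in> orbit act s) \<and>
     (\<forall>s\<in>S. \<forall>t\<in>orbit act s. beta t = beta s)"

definition Delta_star :: "('g \<Rightarrow> 'g) \<Rightarrow> ('g \<Rightarrow> real) \<Rightarrow> ('g \<Rightarrow> 's \<Rightarrow> 's) \<Rightarrow> ('s \<Rightarrow> 's) \<Rightarrow> 's \<Rightarrow> real" where
  "Delta_star ginv Delta act beta s = Delta (ginv (SOME g. act g (beta s) = s))"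

end

theory Submission imports Defs begin

text \<open>For a measurable subgroup H of G and a point b, the fibres {k \<in> H. k b = u}, u \<in> H b, are
left translates of H \<inter> G_{b,b} and partition H into countably many pieces, so left invariance
gives \<lambda>(H) = \<lambda>(H \<inter> G_{b,b}) |H b|. For H = G this reads \<lambda>(G) = \<lambda>(G_{s,s}) |G s|: stabilisers
have positive measure, and when their measure is finite every orbit is finite exactly if
\<lambda>(G) is. For H = G_{a,a} the common factor \<lambda>(G_{a,a} \<inter> G_{b,b}) cancels from
\<lambda>(G_{a,a}) / \<lambda>(G_{b,b}) and leaves |G_{a,a} b| / |G_{b,b} a|. Properness amounts to finiteness of
\<lambda>(G_{s,t}) = \<lambda>(G_{s,s}), since the singletons of S form an admissible partition. Finally
G_{s,s} is the right translate of G_{\<beta>(s),s} by g^{-1} when g \<beta>(s) = s, which brings in \<Delta>(g^{-1}).\<close>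

lemma ennreal_eq_mult_count_space_finite:
  fixes x c :: ennreal
  assumes "x = c * emeasure (count_space I) I" and "0 < x" and "x < \<infinity>"
  shows "finite I" and "0 < card I" and "x = c * of_nat (card I)"
proof -
  have "c \<noteq> 0" using assms(1,2) by auto
  then show fin: "finite I"
    using assms(1,3) by (cases "finite I") (auto simp: ennreal_mult_eq_top_iff)
  then show x: "x = c * of_nat (card I)" using assms(1) by simp
  show "0 < card I" using fin x assms(2) by (auto simp: card_gt_0_iff)
qed

locale countable_haar_action =
  fixes gmul :: "'g::topological_space \<Rightarrow> 'g \<Rightarrow> 'g" and ginv :: "'g \<Rightarrow> 'g" and e :: 'g
    and lam :: "'g measure" and act :: "'g \<Rightarrow> 's \<Rightarrow> 's" and S :: "'s set"
  assumes assoc: "\<And>x y z. gmul (gmul x y) z = gmul x (gmul y z)"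
    and left_unit: "\<And>x. gmul e x = x"
    and continuous_mult: "continuous_on UNIV (\<lambda>(x, y). gmul x y)"
    and left_inverse: "\<And>x. gmul (ginv x) x = e" and right_inverse: "\<And>x. gmul x (ginv x) = e"
    and haar: "left_haar gmul lam"
    and countable_S: "countable S"
    and action: "measurable_action gmul e act S"
begin

lemma sets_lam: "sets lam = sets borel"
  using haar unfolding left_haar_def by auto

lemma space_lam: "space lam = UNIV"
  using sets_eq_imp_space_eq[OF sets_lam] by simp

lemma emeasure_left_translate: "A \<in> sets borel \<Longrightarrow> emeasure lam (gmul g ` A) = emeasure lam A"
  using haar unfolding left_haar_def by auto

lemma act_in_S: "s \<in> S \<Longrightarrow> act g s \<in> S"
  and act_unit: "s \<in> S \<Longrightarrow> act e s = s"
  and act_mult: "s \<in> S \<Longrightarrow> act (gmul g h) s = act g (act h s)"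
  using action unfolding measurable_action_def by auto

lemma act_inverse:
  assumes "s \<in> S" and "act g s = t"
  shows "act (ginv g) t = s"
  using act_mult[OF assms(1), of "ginv g" g] by (simp add: assms left_inverse act_unit)

lemma measurable_orbit_map: "s \<in> S \<Longrightarrow> (\<lambda>g. act g s) \<in> lam \<rightarrow>\<^sub>M count_space S"
proof -
  assume s: "s \<in> S"
  have pair: "(\<lambda>g. (g, s)) \<in> lam \<rightarrow>\<^sub>M borel \<Otimes>\<^sub>M count_space S"
    by (rule measurable_Pair) (auto simp: s measurable_cong_sets[OF sets_lam refl])
  have "(\<lambda>(g, s). act g s) \<in> borel \<Otimes>\<^sub>M count_space S \<rightarrow>\<^sub>M count_space S"
    using action unfolding measurable_action_def by auto
  from measurable_comp[OF pair this] show ?thesis by (simp add: o_def)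
qed

lemma emeasure_orbit_measure:
  "s \<in> S \<Longrightarrow> B \<subseteq> S \<Longrightarrow>
    emeasure (orbit_measure lam act S s) B = emeasure lam ((\<lambda>g. act g s) -` B)"
  unfolding orbit_measure_def by (simp add: emeasure_distr measurable_orbit_map space_lam)

lemma Gst_sets: assumes "s \<in> S" shows "Gst act s t \<in> sets lam"
proof (cases "t \<in> S")
  case True
  then have "(\<lambda>g. act g s) -` {t} \<inter> space lam \<in> sets lam"
    using measurable_sets[OF measurable_orbit_map[OF assms]] by auto
  then show ?thesis unfolding Gst_def space_lam by (simp add: vimage_def)
next
  case False
  then have "Gst act s t = {}" using act_in_S[OF assms] unfolding Gst_def by auto
  then show ?thesis by simp
qed

lemma subgroup_fibre_eq_left_translate:
  assumes b: "b \<in> S" and mult_closed: "\<And>x y. x \<in> H \<Longrightarrow> y \<in> H \<Longrightarrow> gmul x y \<in> H"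
    and inverse_closed: "\<And>x. x \<in> H \<Longrightarrow> ginv x \<in> H" and g: "g \<in> H"
  shows "H \<inter> Gst act b (act g b) = gmul g ` (H \<inter> Gst act b b)"
proof
  show "H \<inter> Gst act b (act g b) \<subseteq> gmul g ` (H \<inter> Gst act b b)"
  proof
    fix k assume k: "k \<in> H \<inter> Gst act b (act g b)"
    have "k = gmul g (gmul (ginv g) k)" by (simp add: assoc[symmetric] right_inverse left_unit)
    moreover have "gmul (ginv g) k \<in> H \<inter> Gst act b b"
      using k g mult_closed inverse_closed act_mult[OF b] act_inverse[OF b]
      unfolding Gst_def by auto
    ultimately show "k \<in> gmul g ` (H \<inter> Gst act b b)" by blast
  qed
  show "gmul g ` (H \<inter> Gst act b b) \<subseteq> H \<inter> Gst act b (act g b)"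
    using mult_closed g act_mult[OF b] unfolding Gst_def by auto
qed

lemma emeasure_subgroup_eq_stabilizer_times_orbit:
  assumes H: "H \<in> sets lam" and b: "b \<in> S"
    and mult_closed: "\<And>x y. x \<in> H \<Longrightarrow> y \<in> H \<Longrightarrow> gmul x y \<in> H"
    and inverse_closed: "\<And>x. x \<in> H \<Longrightarrow> ginv x \<in> H"
  shows "emeasure lam H
    = emeasure lam (H \<inter> Gst act b b)
      * emeasure (count_space ((\<lambda>g. act g b) ` H)) ((\<lambda>g. act g b) ` H)"
proof -
  define I where "I = (\<lambda>g. act g b) ` H"
  define F where "F u = H \<inter> Gst act b u" for u
  have "countable I"
    by (rule countable_subset[OF _ countable_S]) (use act_in_S[OF b] in \<open>auto simp: I_def\<close>)
  moreover have "H = (\<Union>u\<in>I. F u)" unfolding I_def F_def Gst_def by auto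
  moreover have "F u \<in> sets lam" for u unfolding F_def using H Gst_sets[OF b] by auto
  moreover have "disjoint_family_on F I" unfolding disjoint_family_on_def F_def Gst_def by auto
  ultimately have "emeasure lam H = (\<integral>\<^sup>+ u. emeasure lam (F u) \<partial>count_space I)"
    using emeasure_UN_countable[of I F lam] by auto
  also have "\<dots> = (\<integral>\<^sup>+ u. emeasure lam (F b) \<partial>count_space I)"
  proof (rule nn_integral_cong)
    fix u assume "u \<in> space (count_space I)"
    then obtain g where "g \<in> H" "u = act g b" by (auto simp: I_def)
    moreover have "F b \<in> sets borel" using \<open>\<And>u. F u \<in> sets lam\<close> sets_lam by auto
    ultimately show "emeasure lam (F u) = emeasure lam (F b)"
      using subgroup_fibre_eq_left_translate[OF b mult_closed inverse_closed]
      by (simp add: F_def emeasure_left_translate)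
  qed
  finally show ?thesis by (simp add: F_def I_def)
qed

lemma emeasure_UNIV_eq_stabilizer_times_orbit:
  "s \<in> S \<Longrightarrow>
    emeasure lam UNIV = emeasure lam (Gst act s s) * emeasure (count_space (orbit act s)) (orbit act s)"
  using emeasure_subgroup_eq_stabilizer_times_orbit[of UNIV s] sets.top[of lam]
  by (simp add: orbit_def space_lam)

lemma emeasure_stabilizer_pos: "s \<in> S \<Longrightarrow> 0 < emeasure lam (Gst act s s)"
  using emeasure_UNIV_eq_stabilizer_times_orbit haar unfolding left_haar_def
  by (fastforce simp: zero_less_iff_neq_zero)

lemma emeasure_stabilizer_eq_inter_times_orbit:
  assumes a: "a \<in> S" and b: "b \<in> S"
  shows "emeasure lam (Gst act a a) = emeasure lam (Gst act a a \<inter> Gst act b b)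
     * emeasure (count_space ((\<lambda>g. act g b) ` Gst act a a)) ((\<lambda>g. act g b) ` Gst act a a)"
  by (rule emeasure_subgroup_eq_stabilizer_times_orbit[OF Gst_sets[OF a] b])
    (use act_mult[OF a] act_inverse[OF a, of _ a] in \<open>auto simp: Gst_def\<close>)

lemma emeasure_Gst_eq_stabilizer:
  assumes s: "s \<in> S" and t: "act g s = t"
  shows "emeasure lam (Gst act s t) = emeasure lam (Gst act s s)"
proof -
  have "Gst act s t = gmul g ` Gst act s s"
    using subgroup_fibre_eq_left_translate[OF s, of UNIV g] t by simp
  then show ?thesis using Gst_sets[OF s] sets_lam by (simp add: emeasure_left_translate)
qed

lemma emeasure_stabilizer_finite_if_proper:
  assumes "proper_action lam act S" and s: "s \<in> S"
  shows "emeasure lam (Gst act s s) < \<infinity>"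
proof -
  obtain B :: "nat \<Rightarrow> 's set" where cover: "(\<Union>n. B n) = S"
    and fin: "\<forall>s\<in>S. \<forall>n. emeasure (orbit_measure lam act S s) (B n) < \<infinity>"
    using assms(1) unfolding proper_action_def by blast
  obtain n where n: "s \<in> B n" using s cover by auto
  have "(\<lambda>g. act g s) -` B n \<in> sets lam"
    using measurable_sets[OF measurable_orbit_map[OF s], of "B n"] cover by (auto simp: space_lam)
  moreover have "Gst act s s \<subseteq> (\<lambda>g. act g s) -` B n" using n unfolding Gst_def by auto
  ultimately have "emeasure lam (Gst act s s) \<le> emeasure lam ((\<lambda>g. act g s) -` B n)"
    by (rule emeasure_mono[rotated])
  also have "\<dots> = emeasure (orbit_measure lam act S s) (B n)"
    using cover by (subst emeasure_orbit_measure[OF s]) auto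
  finally show ?thesis using fin s by (simp add: order.strict_trans1)
qed

lemma proper_if_emeasure_stabilizers_finite:
  assumes fin: "\<And>s. s \<in> S \<Longrightarrow> emeasure lam (Gst act s s) < \<infinity>"
  shows "proper_action lam act S"
proof -
  define B where "B n = {t\<in>S. to_nat_on S t = n}" for n
  have "emeasure (orbit_measure lam act S s) (B n) < \<infinity>" if s: "s \<in> S" for s n
  proof (cases "B n = {}")
    case False
    then obtain t where t: "t \<in> S" and Bn: "B n = {t}"
      using to_nat_on_inj[OF countable_S] unfolding B_def by blast
    have "emeasure (orbit_measure lam act S s) (B n) = emeasure lam (Gst act s t)"
      using emeasure_orbit_measure[OF s, of "{t}"] t Bn by (simp add: Gst_def vimage_def)
    also have "\<dots> < \<infinity>"
    proof (cases "t \<in> orbit act s")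
      case True
      then show ?thesis using emeasure_Gst_eq_stabilizer[OF s] fin[OF s] by (auto simp: orbit_def)
    next
      case False
      then have "Gst act s t = {}" by (auto simp: Gst_def orbit_def)
      then show ?thesis by simp
    qed
    finally show ?thesis .
  qed simp
  moreover have "disjoint_family B" "(\<Union>n. B n) = S"
    unfolding disjoint_family_on_def B_def by auto
  ultimately show ?thesis unfolding proper_action_def by blast
qed

lemma proper_action_iff_emeasure_stabilizers:
  "proper_action lam act S \<longleftrightarrow>
     (\<forall>s\<in>S. 0 < emeasure lam (Gst act s s) \<and> emeasure lam (Gst act s s) < \<infinity>)"
  using emeasure_stabilizer_finite_if_proper proper_if_emeasure_stabilizers_finite
    emeasure_stabilizer_pos by blast

lemma orbits_all_finite_or_all_infinite:
  assumes fin: "\<And>s. s \<in> S \<Longrightarrow> emeasure lam (Gst act s s) < \<infinity>"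
  shows "(\<forall>s\<in>S. infinite (orbit act s)) \<or> (\<forall>s\<in>S. finite (orbit act s))"
proof -
  have "finite (orbit act s) \<longleftrightarrow> emeasure lam UNIV < \<infinity>" if s: "s \<in> S" for s
  proof -
    have "emeasure lam (Gst act s s) \<noteq> 0" using emeasure_stabilizer_pos[OF s] by simp
    moreover have "emeasure lam (Gst act s s) \<noteq> \<infinity>" using fin[OF s] by simp
    ultimately show ?thesis
      using emeasure_UNIV_eq_stabilizer_times_orbit[OF s]
      by (cases "finite (orbit act s)")
        (simp_all add: ennreal_mult_less_top ennreal_mult_eq_top_iff of_nat_less_top
          top.not_eq_extremum)
  qed
  then show ?thesis by blast
qed

lemma measure_stabilizer_ratio_eq_card_ratio:
  assumes fin: "\<And>s. s \<in> S \<Longrightarrow> emeasure lam (Gst act s s) < \<infinity>"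
    and a: "a \<in> S" and b: "b \<in> S"
  shows "measure lam (Gst act a a) / measure lam (Gst act b b)
     = real (card ((\<lambda>g. act g b) ` Gst act a a)) / real (card ((\<lambda>g. act g a) ` Gst act b b))"
proof -
  define c where "c = emeasure lam (Gst act a a \<inter> Gst act b b)"
  define I where "I = (\<lambda>g. act g b) ` Gst act a a"
  define J where "J = (\<lambda>g. act g a) ` Gst act b b"
  note decomp_a = emeasure_stabilizer_eq_inter_times_orbit[OF a b, folded c_def I_def]
  note decomp_b = emeasure_stabilizer_eq_inter_times_orbit[OF b a, folded J_def,
      unfolded Int_commute[of "Gst act b b"], folded c_def]
  note pos = emeasure_stabilizer_pos[OF a] emeasure_stabilizer_pos[OF b]
  have a_eq: "emeasure lam (Gst act a a) = c * of_nat (card I)"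
    by (rule ennreal_eq_mult_count_space_finite(3)[OF decomp_a pos(1) fin[OF a]])
  have b_eq: "emeasure lam (Gst act b b) = c * of_nat (card J)"
    by (rule ennreal_eq_mult_count_space_finite(3)[OF decomp_b pos(2) fin[OF b]])
  have "0 < card I"
    by (rule ennreal_eq_mult_count_space_finite(2)[OF decomp_a pos(1) fin[OF a]])
  have "0 < card J"
    by (rule ennreal_eq_mult_count_space_finite(2)[OF decomp_b pos(2) fin[OF b]])
  moreover have "0 < enn2real c"
  proof -
    have "c \<noteq> 0" using a_eq pos(1) by auto
    moreover have "c \<noteq> \<infinity>"
      using a_eq fin[OF a] \<open>0 < card I\<close> by (auto simp: ennreal_mult_eq_top_iff)
    ultimately show ?thesis
      by (simp add: enn2real_positive_iff top.not_eq_extremum zero_less_iff_neq_zero)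
  qed
  ultimately show ?thesis
    unfolding measure_def a_eq b_eq I_def[symmetric] J_def[symmetric]
    by (simp add: enn2real_mult)
qed

lemma measurable_right_translate: "(\<lambda>x. gmul x h) \<in> lam \<rightarrow>\<^sub>M lam"
proof -
  have "continuous_on UNIV (\<lambda>x. gmul x h)"
    using continuous_on_compose2[OF continuous_mult
        continuous_on_Pair[OF continuous_on_id continuous_on_const]] by simp
  then show ?thesis
    using borel_measurable_continuous_onI measurable_cong_sets[OF sets_lam sets_lam] by blast
qed

lemma emeasure_right_translate:
  assumes "modular_fun gmul ginv lam Delta" and A: "A \<in> sets lam"
  shows "emeasure lam ((\<lambda>x. gmul x h) -` A) = ennreal (Delta (ginv h)) * emeasure lam A"
proof -
  have "(\<lambda>x. gmul x h) -` A \<in> sets lam"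
    using measurable_sets[OF measurable_right_translate A] by (simp add: space_lam)
  then have "emeasure lam ((\<lambda>x. gmul x h) -` A) = (\<integral>\<^sup>+ x. indicator A (gmul x h) \<partial>lam)"
    by (simp flip: nn_integral_indicator add: indicator_def)
  also have "\<dots> = ennreal (Delta (ginv h)) * (\<integral>\<^sup>+ x. indicator A x \<partial>lam)"
    using assms(1) A sets_lam unfolding modular_fun_def by simp
  finally show ?thesis using A by simp
qed

lemma Delta_star_eq_measure_ratio:
  assumes modular: "modular_fun gmul ginv lam Delta" and rep: "orbit_rep act S beta"
    and fin: "\<And>s. s \<in> S \<Longrightarrow> emeasure lam (Gst act s s) < \<infinity>" and s: "s \<in> S"
  shows "Delta_star ginv Delta act beta s
    = measure lam (Gst act s s) / measure lam (Gst act (beta s) (beta s))"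
proof -
  define b where "b = beta s"
  obtain h where "act h s = b" using rep s unfolding orbit_rep_def orbit_def b_def by auto
  then have b: "b \<in> S" and "\<exists>g. act g b = s" using act_in_S[OF s] act_inverse[OF s] by auto
  define g where "g = (SOME g. act g b = s)"
  have g: "act g b = s" unfolding g_def by (rule someI_ex) fact
  have "Gst act s s = (\<lambda>x. gmul x g) -` Gst act b s"
    using act_mult[OF b] g by (auto simp: Gst_def)
  then have "emeasure lam (Gst act s s) = ennreal (Delta (ginv g)) * emeasure lam (Gst act b b)"
    using emeasure_right_translate[OF modular Gst_sets[OF b]] emeasure_Gst_eq_stabilizer[OF b g]
    by simp
  moreover have "0 < Delta (ginv g)" using modular unfolding modular_fun_def by blast
  moreover have "0 < measure lam (Gst act b b)"
    using emeasure_stabilizer_pos[OF b] fin[OF b] by (simp add: measure_def enn2real_positive_iff)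
  ultimately show ?thesis
    unfolding Delta_star_def b_def[symmetric] g_def[symmetric] measure_def
    by (simp add: enn2real_mult)
qed

end

theorem lemma2p7:
  fixes gmul :: "'g::{t2_space,second_countable_topology} \<Rightarrow> 'g \<Rightarrow> 'g"
    and ginv :: "'g \<Rightarrow> 'g" and e :: 'g
    and lam :: "'g measure" and Delta :: "'g \<Rightarrow> real"
    and act :: "'g \<Rightarrow> 's \<Rightarrow> 's" and S :: "'s set" and beta :: "'s \<Rightarrow> 's"
  assumes "lcsc_group gmul ginv e"
    and "left_haar gmul lam"
    and "modular_fun gmul ginv lam Delta"
    and "countable S"
    and "measurable_action gmul e act S"
    and "orbit_rep act S beta"
  shows "(proper_action lam act S \<longleftrightarrow>
            (\<forall>s\<in>S. 0 < emeasure lam (Gst act s s) \<and> emeasure lam (Gst act s s) < \<infinity>))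
       \<and> (proper_action lam act S \<longrightarrow>
            (\<forall>s\<in>S.
               Delta_star ginv Delta act beta s
                 = measure lam (Gst act s s) / measure lam (Gst act (beta s) (beta s))
             \<and> Delta_star ginv Delta act beta s
                 = real (card ((\<lambda>g. act g (beta s)) ` Gst act s s))
                   / real (card ((\<lambda>g. act g s) ` Gst act (beta s) (beta s))))
          \<and> ((\<forall>s\<in>S. infinite (orbit act s)) \<or> (\<forall>s\<in>S. finite (orbit act s))))"
proof -
  interpret countable_haar_action gmul ginv e lam act S
    using assms(1,2,4,5) unfolding lcsc_group_def by unfold_locales auto
  have "Delta_star ginv Delta act beta s
          = real (card ((\<lambda>g. act g (beta s)) ` Gst act s s))
            / real (card ((\<lambda>g. act g s) ` Gst act (beta s) (beta s)))"
    if fin: "\<And>s. s \<in> S \<Longrightarrow> emeasure lam (Gst act s s) < \<infinity>" and s: "s \<in> S" for s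
  proof -
    have "beta s \<in> S"
      using assms(6) s act_in_S[OF s] unfolding orbit_rep_def orbit_def by auto
    then show ?thesis
      using Delta_star_eq_measure_ratio[OF assms(3,6) fin s]
        measure_stabilizer_ratio_eq_card_ratio[OF fin s] by simp
  qed
  then show ?thesis
    using proper_action_iff_emeasure_stabilizers Delta_star_eq_measure_ratio[OF assms(3,6)]
      orbits_all_finite_or_all_infinite by auto
qed

end
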